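(* If the bornological \(V\)-module \(M\) is torsionfree, then so is \(M'\).
   Context: Let \(V\) be a complete discrete valuation ring with uniformiser \(\pi\). A bornology on a set is a collection of subsets (called bounded) containing all finite subsets and closed under finite unions and under taking subsets. A bornological \(V\)-module is a \(V\)-module \(M\) with a bornology such that every bounded subset is contained in a bounded \(V\)-submodule. \(M\) is (bornologically) torsionfree if it is torsionfree as a \(V\)-module and \(\pi^{-1}S=\{x\in M:\pi x\in S\}\) is bounded for every bounded \(S\subseteq M\). A subset \(S\subseteq M\) is compactoid if there is a bounded \(V\)-submodule \(T\subseteq M\) with \(S\subseteq T\) such that for every \(n\in\mathbb N\) there is a finite set \(F_n\subseteq T\) with \(S\subseteq VF_n+\pi^nT\). \(M'\) denotes \(M\) with the bornology consisting of the compactoid subsets. *)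

theory Defs
  imports Complex_Main
begin

text \<open>The ring V is the whole type 'v (an integral domain); \<pi> is a uniformiser:
  nonzero, not a unit, and every nonzero element is a unit times a power of \<pi>.\<close>

definition dvr_uniformiser :: "'v::idom \<Rightarrow> bool" where
  "dvr_uniformiser \<pi> \<longleftrightarrow> \<pi> \<noteq> 0 \<and> \<not> (\<pi> dvd 1) \<and>
     (\<forall>x. x \<noteq> 0 \<longrightarrow> (\<exists>u n. u dvd 1 \<and> x = u * \<pi> ^ n))"

definition pi_adically_complete :: "'v::idom \<Rightarrow> bool" where
  "pi_adically_complete \<pi> \<longleftrightarrow>
     (\<forall>a::nat \<Rightarrow> 'v. (\<forall>n. \<pi> ^ n dvd (a (Suc n) - a n)) \<longrightarrow>
        (\<exists>l. \<forall>n. \<pi> ^ n dvd (l - a n)))"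

definition complete_dvr :: "'v::idom \<Rightarrow> bool" where
  "complete_dvr \<pi> \<longleftrightarrow> dvr_uniformiser \<pi> \<and> pi_adically_complete \<pi>"

definition bornology :: "'m set set \<Rightarrow> bool" where
  "bornology B \<longleftrightarrow> (\<forall>F. finite F \<longrightarrow> F \<in> B) \<and>
     (\<forall>S\<in>B. \<forall>T\<in>B. S \<union> T \<in> B) \<and> (\<forall>S\<in>B. \<forall>T. T \<subseteq> S \<longrightarrow> T \<in> B)"

definition born_module ::
  "('v::comm_ring_1 \<Rightarrow> 'm::ab_group_add \<Rightarrow> 'm) \<Rightarrow> 'm set set \<Rightarrow> bool" where
  "born_module scale B \<longleftrightarrow> module scale \<and> bornology B \<and>
     (\<forall>S\<in>B. \<exists>T\<in>B. module.subspace scale T \<and> S \<subseteq> T)"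

definition pi_inv :: "('v \<Rightarrow> 'm \<Rightarrow> 'm) \<Rightarrow> 'v \<Rightarrow> 'm set \<Rightarrow> 'm set" where
  "pi_inv scale \<pi> S = {x. scale \<pi> x \<in> S}"

definition torsionfree_module ::
  "('v::comm_ring_1 \<Rightarrow> 'm::ab_group_add \<Rightarrow> 'm) \<Rightarrow> bool" where
  "torsionfree_module scale \<longleftrightarrow> (\<forall>c x. c \<noteq> 0 \<longrightarrow> scale c x = 0 \<longrightarrow> x = 0)"

definition born_torsionfree ::
  "('v::comm_ring_1 \<Rightarrow> 'm::ab_group_add \<Rightarrow> 'm) \<Rightarrow> 'v \<Rightarrow> 'm set set \<Rightarrow> bool" where
  "born_torsionfree scale \<pi> B \<longleftrightarrow> torsionfree_module scale \<and>
     (\<forall>S\<in>B. pi_inv scale \<pi> S \<in> B)"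

definition compactoid ::
  "('v::comm_ring_1 \<Rightarrow> 'm::ab_group_add \<Rightarrow> 'm) \<Rightarrow> 'v \<Rightarrow> 'm set set \<Rightarrow> 'm set \<Rightarrow> bool" where
  "compactoid scale \<pi> B S \<longleftrightarrow>
     (\<exists>T. T \<in> B \<and> module.subspace scale T \<and> S \<subseteq> T \<and>
        (\<forall>n::nat. \<exists>F. finite F \<and> F \<subseteq> T \<and>
           S \<subseteq> {a + b | a b. a \<in> module.span scale F \<and> b \<in> scale (\<pi> ^ n) ` T}))"

text \<open>The bornology of M': the compactoid subsets.\<close>
definition compactoid_bornology ::
  "('v::comm_ring_1 \<Rightarrow> 'm::ab_group_add \<Rightarrow> 'm) \<Rightarrow> 'v \<Rightarrow> 'm set set \<Rightarrow> 'm set set" where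
  "compactoid_bornology scale \<pi> B = {S. compactoid scale \<pi> B S}"

end

theory Submission
  imports Defs
begin

text \<open>If S is compactoid in the bounded submodule T, then \<pi>\<inverse>S is compactoid in \<pi>\<inverse>T,
  which is bounded because M is torsionfree. Given n, choose a finite F with
  S \<subseteq> VF + \<pi>^(n+1) T. Over the discrete valuation ring V the submodule VF \<inter> \<pi>M of the
  finitely generated module VF is again finitely generated, say by \<pi>G with G finite.
  If \<pi>x \<in> S, write \<pi>x = a + \<pi>^(n+1) t; then a = \<pi>z with z \<in> VG, and cancelling \<pi> gives
  x = z + \<pi>^n t \<in> VG + \<pi>^n (\<pi>\<inverse>T).\<close>

lemma dvr_ideal_principal:
  fixes \<pi> :: "'v::idom" and I :: "'v set"
  assumes U: "dvr_uniformiser \<pi>" and "I \<noteq> {}" and ideal: "\<And>c k. k \<in> I \<Longrightarrow> c * k \<in> I"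
  shows "\<exists>d\<in>I. \<forall>k\<in>I. d dvd k"
proof (cases "I \<subseteq> {0}")
  case True
  then show ?thesis using \<open>I \<noteq> {}\<close> by auto
next
  case False
  have power_in_I: "\<exists>j. \<pi> ^ j \<in> I \<and> (\<exists>u. u dvd 1 \<and> k = u * \<pi> ^ j)"
    if "k \<in> I" "k \<noteq> 0" for k
  proof -
    from U that obtain u j where u: "u dvd 1" and k: "k = u * \<pi> ^ j"
      unfolding dvr_uniformiser_def by blast
    from u obtain v where "1 = u * v" by (auto elim: dvdE)
    then have "\<pi> ^ j = v * k" using k by (simp add: ac_simps)
    then show ?thesis using ideal[OF \<open>k \<in> I\<close>] u k by metis
  qed
  define m where "m = (LEAST j. \<pi> ^ j \<in> I)"
  from False power_in_I have "\<exists>j. \<pi> ^ j \<in> I" by blast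
  then have "\<pi> ^ m \<in> I" unfolding m_def by (rule LeastI_ex)
  moreover have "\<pi> ^ m dvd k" if "k \<in> I" for k
  proof (cases "k = 0")
    case False
    with power_in_I \<open>k \<in> I\<close> obtain j u where "\<pi> ^ j \<in> I" "k = u * \<pi> ^ j" by blast
    moreover from \<open>\<pi> ^ j \<in> I\<close> have "m \<le> j" unfolding m_def by (rule Least_le)
    ultimately show ?thesis by (simp add: le_imp_power_dvd)
  qed simp
  ultimately show ?thesis by blast
qed

lemma torsionfree_scale_cancel:
  assumes "module scale" "torsionfree_module scale" "c \<noteq> 0" "scale c x = scale c y"
  shows "x = y"
proof -
  have "scale c (x - y) = 0"
    using assms(1,4) by (simp add: module.scale_right_diff_distrib)
  then show ?thesis using assms(2,3) unfolding torsionfree_module_def by force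
qed

context
  fixes scale :: "'v::idom \<Rightarrow> 'm::ab_group_add \<Rightarrow> 'm"
  assumes M: "module scale"
begin

interpretation module scale by (rule M)

interpretation scale_hom: module_hom scale scale "scale c" for c
  by (rule module_hom_scale_self)

lemma subspace_pi_inv: "subspace T \<Longrightarrow> subspace (pi_inv scale c T)"
  using scale_hom.subspace_vimage by (simp add: pi_inv_def vimage_def)

lemma dvr_submodule_finitely_generated:
  fixes \<pi> :: 'v
  assumes U: "dvr_uniformiser \<pi>" and "finite F" and "subspace N" and "N \<subseteq> span F"
  shows "\<exists>G. finite G \<and> G \<subseteq> N \<and> N \<subseteq> span G"
  using assms(2-4)
proof (induction F arbitrary: N rule: finite_induct)
  case empty
  then show ?case by (intro exI[of _ "{}"]) auto
next
  case (insert f F N)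
  from insert.prems have "subspace (N \<inter> span F)" by (simp add: subspace_inter)
  with insert.IH[of "N \<inter> span F"] obtain G
    where G: "finite G" "G \<subseteq> N \<inter> span F" "N \<inter> span F \<subseteq> span G"
    by auto
  txt \<open>The coefficients of f in the elements of N form an ideal of V; an element of N whose
    coefficient generates this ideal is the one generator needed beyond those of N \<inter> VF.\<close>
  define I where "I = {k. \<exists>y\<in>N. y - scale k f \<in> span F}"
  have "0 \<in> I"
    unfolding I_def using insert.prems(1) by (auto intro: subspace_0 span_zero)
  have ideal_I: "c * k \<in> I" if "k \<in> I" for c k
  proof -
    from that obtain y where "y \<in> N" "y - scale k f \<in> span F" unfolding I_def by blast
    then have "scale c y \<in> N" "scale c y - scale (c * k) f \<in> span F"
      using insert.prems(1) span_scale[of "y - scale k f" F c]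
      by (auto simp: subspace_scale scale_right_diff_distrib)
    then show ?thesis unfolding I_def by blast
  qed
  obtain d where "d \<in> I" and d_dvd: "\<forall>k\<in>I. d dvd k"
    using dvr_ideal_principal[OF U _ ideal_I] \<open>0 \<in> I\<close> by blast
  then obtain y0 where y0: "y0 \<in> N" "y0 - scale d f \<in> span F" unfolding I_def by blast
  have "y \<in> span (insert y0 G)" if "y \<in> N" for y
  proof -
    from that insert.prems obtain k where k: "y - scale k f \<in> span F"
      using span_breakdown_eq by blast
    with \<open>y \<in> N\<close> d_dvd obtain e where "k = d * e" unfolding I_def by (auto elim: dvdE)
    define z where "z = y - scale e y0"
    have "z \<in> N" unfolding z_def using \<open>y \<in> N\<close> y0 insert.prems(1)
      by (simp add: subspace_diff subspace_scale)
    moreover have "z = (y - scale k f) - scale e (y0 - scale d f)"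
      unfolding z_def \<open>k = d * e\<close> by (simp add: scale_right_diff_distrib ac_simps)
    then have "z \<in> span F" using k y0 by (simp add: span_diff span_scale)
    ultimately have "z \<in> span (insert y0 G)" using G span_mono[of G "insert y0 G"] by blast
    then have "z + scale e y0 \<in> span (insert y0 G)"
      by (simp add: span_add span_base span_scale)
    then show ?thesis unfolding z_def by simp
  qed
  then show ?case using G y0 by (intro exI[of _ "insert y0 G"]) auto
qed

lemma span_inter_range_scale_finitely_generated:
  fixes \<pi> :: 'v
  assumes "dvr_uniformiser \<pi>" and "finite F"
  obtains G where "finite G" "scale c ` G \<subseteq> span F"
    and "span F \<inter> range (scale c) \<subseteq> scale c ` span G"
proof -
  have "subspace (span F \<inter> range (scale c))"
    using subspace_span scale_hom.subspace_image[OF subspace_UNIV] by (rule subspace_inter)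
  from dvr_submodule_finitely_generated[OF assms this Int_lower1]
  obtain G0 where G0: "finite G0" "G0 \<subseteq> span F \<inter> range (scale c)"
    and spans: "span F \<inter> range (scale c) \<subseteq> span G0"
    by blast
  from G0 obtain G where "finite G" and G0_image: "G0 = scale c ` G"
    using finite_subset_image[of G0 "scale c" UNIV] by blast
  show ?thesis
  proof (rule that)
    show "finite G" by fact
    show "scale c ` G \<subseteq> span F" using G0(2) G0_image by blast
    have "span G0 = scale c ` span G" unfolding G0_image by (rule scale_hom.span_image)
    with spans show "span F \<inter> range (scale c) \<subseteq> scale c ` span G" by simp
  qed
qed

lemma pi_inv_approximation:
  fixes \<pi> :: 'v
  assumes U: "dvr_uniformiser \<pi>" and tf: "torsionfree_module scale"
    and "finite F" and "subspace T"
    and S: "S \<subseteq> {a + b | a b. a \<in> span F \<and> b \<in> scale (\<pi> ^ Suc n) ` T}"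
    and F: "F \<subseteq> T"
  shows "\<exists>G. finite G \<and> G \<subseteq> pi_inv scale \<pi> T \<and>
           pi_inv scale \<pi> S \<subseteq> {a + b | a b. a \<in> span G \<and> b \<in> scale (\<pi> ^ n) ` pi_inv scale \<pi> T}"
proof -
  obtain G where G: "finite G" "scale \<pi> ` G \<subseteq> span F"
    and lift: "span F \<inter> range (scale \<pi>) \<subseteq> scale \<pi> ` span G"
    using span_inter_range_scale_finitely_generated[OF U \<open>finite F\<close>] by blast
  have "span F \<subseteq> T" using F \<open>subspace T\<close> by (rule span_minimal)
  with G have "G \<subseteq> pi_inv scale \<pi> T" unfolding pi_inv_def by auto
  moreover have "x \<in> {a + b | a b. a \<in> span G \<and> b \<in> scale (\<pi> ^ n) ` pi_inv scale \<pi> T}"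
    if "x \<in> pi_inv scale \<pi> S" for x
  proof -
    from that have "scale \<pi> x \<in> S" unfolding pi_inv_def by simp
    with S obtain a t where "a \<in> span F" "t \<in> T"
      and xa: "scale \<pi> x = a + scale (\<pi> ^ Suc n) t" by blast
    have a: "a = scale \<pi> (x - scale (\<pi> ^ n) t)"
      using xa by (simp add: scale_right_diff_distrib)
    with \<open>a \<in> span F\<close> have "a \<in> span F \<inter> range (scale \<pi>)" by blast
    with lift obtain z where "z \<in> span G" "a = scale \<pi> z" by blast
    have "\<pi> \<noteq> 0" using U unfolding dvr_uniformiser_def by blast
    from torsionfree_scale_cancel[OF M tf this] \<open>a = scale \<pi> z\<close> a
    have "x = z + scale (\<pi> ^ n) t" by (metis diff_add_cancel)
    moreover have "t \<in> pi_inv scale \<pi> T"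
      unfolding pi_inv_def using \<open>t \<in> T\<close> \<open>subspace T\<close> by (simp add: subspace_scale)
    ultimately show ?thesis using \<open>z \<in> span G\<close> by (auto intro: imageI)
  qed
  ultimately show ?thesis using G(1) by (intro exI[of _ G] conjI subsetI) blast+
qed

lemma compactoid_pi_inv:
  fixes \<pi> :: 'v
  assumes U: "dvr_uniformiser \<pi>" and tf: "born_torsionfree scale \<pi> B"
    and "compactoid scale \<pi> B S"
  shows "compactoid scale \<pi> B (pi_inv scale \<pi> S)"
proof -
  from \<open>compactoid scale \<pi> B S\<close> obtain T where T: "T \<in> B" "subspace T" "S \<subseteq> T"
    and approx: "\<And>n::nat. \<exists>F. finite F \<and> F \<subseteq> T \<and>
           S \<subseteq> {a + b | a b. a \<in> span F \<and> b \<in> scale (\<pi> ^ n) ` T}"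
    unfolding compactoid_def by blast
  have "pi_inv scale \<pi> T \<in> B" using tf T unfolding born_torsionfree_def by blast
  moreover have "subspace (pi_inv scale \<pi> T)" using T by (simp add: subspace_pi_inv)
  moreover have "pi_inv scale \<pi> S \<subseteq> pi_inv scale \<pi> T" using T unfolding pi_inv_def by blast
  moreover have "\<exists>G. finite G \<and> G \<subseteq> pi_inv scale \<pi> T \<and>
      pi_inv scale \<pi> S \<subseteq> {a + b | a b. a \<in> span G \<and> b \<in> scale (\<pi> ^ n) ` pi_inv scale \<pi> T}"
    for n
  proof -
    from approx[of "Suc n"] obtain F where "finite F" "F \<subseteq> T"
      and "S \<subseteq> {a + b | a b. a \<in> span F \<and> b \<in> scale (\<pi> ^ Suc n) ` T}"
      by blast
    moreover have "torsionfree_module scale" using tf unfolding born_torsionfree_def by blast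
    ultimately show ?thesis using \<open>subspace T\<close> U by (intro pi_inv_approximation)
  qed
  ultimately show ?thesis unfolding compactoid_def by blast
qed

end

theorem lemma4p2:
  fixes scale :: "'v::idom \<Rightarrow> 'm::ab_group_add \<Rightarrow> 'm"
    and \<pi> :: 'v and B :: "'m set set"
  assumes "complete_dvr \<pi>"
    and "born_module scale B"
    and "born_torsionfree scale \<pi> B"
  shows "born_torsionfree scale \<pi> (compactoid_bornology scale \<pi> B)"
proof -
  have "module scale" using assms(2) unfolding born_module_def by blast
  moreover have "dvr_uniformiser \<pi>" using assms(1) unfolding complete_dvr_def by blast
  ultimately have "compactoid scale \<pi> B (pi_inv scale \<pi> S)"
    if "compactoid scale \<pi> B S" for S
    using assms(3) that by (rule compactoid_pi_inv)
  then show ?thesis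
    using assms(3) unfolding born_torsionfree_def compactoid_bornology_def by auto
qed

end
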